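(* The asymptotic completion of a developable Möbius strip has at least one singular point other than cuspidal edge singularities.
   Context: Let $\gamma:\mathbb{R}\to\mathbb{R}^3$ be a $C^\infty$ regular curve which is $l$-periodic ($\gamma(s+l)=\gamma(s)$, $\gamma'(s)\neq 0$), and let $\xi$ be a $C^\infty$ vector field along $\gamma$ which is $l$-odd-periodic ($\xi(s+l)=-\xi(s)$), with $\gamma'(s)$ and $\xi(s)$ linearly independent for every $s$. The immersion $F(s,u)=\gamma(s)+u\xi(s)$ ($s\in\mathbb{R}$, $|u|<\epsilon$, $\epsilon>0$ small) is called a ruled Möbius strip with generating curve $\gamma$ and ruling vector field $\xi$; it is called developable if it is flat, i.e. $\det(\gamma',\xi,\xi')\equiv 0$. The asymptotic completion (a-completion) of $F$ is the $C^\infty$ map $\tilde F(s,u)=\gamma(s)+u\xi(s)$ defined for all $(s,u)\in\mathbb{R}^2$ (regarded on the quotient identifying $(s,u)$ with $(s+l,-u)$). A singular point is a point where the Jacobi matrix has rank less than $2$. A cuspidal edge is a map germ right-left equivalent (i.e. equal after diffeomorphic changes of coordinates in source and target) to $f_C(u,v)=(2u^3,-3u^2,v)$ at the origin. *)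

theory Defs
  imports "HOL-Analysis.Analysis"
begin

text \<open>D vs x is the k-th derivative of f at x (k = length vs) applied to the
  directions in vs; D (v # vs) x is the derivative of D vs at x in direction v.\<close>
definition smooth_on :: "'a::euclidean_space set \<Rightarrow> ('a \<Rightarrow> 'b::real_normed_vector) \<Rightarrow> bool" where
  "smooth_on S f \<longleftrightarrow>
     (\<exists>D :: 'a list \<Rightarrow> 'a \<Rightarrow> 'b.
        (\<forall>x\<in>S. D [] x = f x) \<and>
        (\<forall>vs. \<forall>x\<in>S. (D vs has_derivative (\<lambda>v. D (v # vs) x)) (at x)))"

definition diffeo_on :: "'a::euclidean_space set \<Rightarrow> ('a \<Rightarrow> 'a) \<Rightarrow> bool" where
  "diffeo_on U \<phi> \<longleftrightarrow> open U \<and> open (\<phi> ` U) \<and> inj_on \<phi> U \<and>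
     smooth_on U \<phi> \<and> smooth_on (\<phi> ` U) (inv_into U \<phi>)"

definition rl_equivalent ::
  "('a::euclidean_space \<Rightarrow> 'b::euclidean_space) \<Rightarrow> 'a \<Rightarrow> ('a \<Rightarrow> 'b) \<Rightarrow> 'a \<Rightarrow> bool" where
  "rl_equivalent f p g q \<longleftrightarrow>
     (\<exists>U \<phi> W \<Psi>. p \<in> U \<and> diffeo_on U \<phi> \<and> \<phi> p = q \<and>
        f p \<in> W \<and> diffeo_on W \<Psi> \<and> \<Psi> (f p) = g q \<and> f ` U \<subseteq> W \<and>
        (\<forall>x\<in>U. \<Psi> (f x) = g (\<phi> x)))"

definition singular_point :: "(real \<times> real \<Rightarrow> real^3) \<Rightarrow> real \<times> real \<Rightarrow> bool" where
  "singular_point f p \<longleftrightarrow> (\<exists>f'. (f has_derivative f') (at p) \<and> dim (range f') < 2)"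

definition cuspidal_edge_model :: "real \<times> real \<Rightarrow> real^3" where
  "cuspidal_edge_model = (\<lambda>(u, v). vector [2 * u ^ 3, - 3 * u ^ 2, v])"

definition is_cuspidal_edge :: "(real \<times> real \<Rightarrow> real^3) \<Rightarrow> real \<times> real \<Rightarrow> bool" where
  "is_cuspidal_edge f p \<longleftrightarrow> rl_equivalent f p cuspidal_edge_model (0, 0)"

definition a_completion :: "(real \<Rightarrow> real^3) \<Rightarrow> (real \<Rightarrow> real^3) \<Rightarrow> real \<times> real \<Rightarrow> real^3" where
  "a_completion \<gamma> \<xi> = (\<lambda>(s, u). \<gamma> s + u *\<^sub>R \<xi> s)"

definition developable_moebius_strip :: "real \<Rightarrow> (real \<Rightarrow> real^3) \<Rightarrow> (real \<Rightarrow> real^3) \<Rightarrow> bool" where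
  "developable_moebius_strip l \<gamma> \<xi> \<longleftrightarrow>
     l > 0 \<and> smooth_on UNIV \<gamma> \<and> smooth_on UNIV \<xi> \<and>
     (\<forall>s. \<gamma> (s + l) = \<gamma> s) \<and> (\<forall>s. vector_derivative \<gamma> (at s) \<noteq> 0) \<and>
     (\<forall>s. \<xi> (s + l) = - \<xi> s) \<and>
     (\<forall>s a b. a *\<^sub>R vector_derivative \<gamma> (at s) + b *\<^sub>R \<xi> s = 0 \<longrightarrow> a = 0 \<and> b = 0) \<and>
     (\<forall>s. det (vector [vector_derivative \<gamma> (at s), \<xi> s, vector_derivative \<xi> (at s)]
              :: real^3^3) = 0)"

end

theory Submission
  imports Defs
begin

text \<open>Write \<open>\<xi>' = A \<gamma>' + B \<xi>\<close>, which is possible because the strip is flat. The completion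
  \<open>F(s, u) = \<gamma>(s) + u \<xi>(s)\<close> is singular exactly on the curve \<open>1 + u A(s) = 0\<close>, with null
  direction \<open>(1, - u B(s))\<close>; at a cuspidal edge this direction is transversal to the singular
  curve, i.e. \<open>A' \<noteq> A B\<close>. But the Moebius condition makes \<open>A\<close> antiperiodic, and since
  \<open>A\<close> cannot vanish identically (otherwise \<open>\<xi>' = B \<xi>\<close> could not reverse \<open>\<xi>\<close> over a period),
  a Rolle argument for \<open>exp (- \<integral> B) A\<close> yields a point where \<open>A \<noteq> 0\<close> and \<open>A' = A B\<close>.\<close>

lemma smooth_on_imp_has_derivative:
  assumes "smooth_on S f" "open S" "x \<in> S"
  obtains f' where "(f has_derivative f') (at x)"
proof -
  obtain D where D0: "\<forall>x\<in>S. D [] x = f x"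
    and D: "\<forall>vs. \<forall>x\<in>S. (D vs has_derivative (\<lambda>v. D (v # vs) x)) (at x)"
    using assms(1) unfolding smooth_on_def by blast
  have "(f has_derivative (\<lambda>v. D [v] x)) (at x)"
    using has_derivative_transform_within_open[OF D[THEN spec[of _ "[]"], THEN bspec, OF assms(3)]
        assms(2,3)] D0 by blast
  then show thesis by (rule that)
qed

lemma smooth_on_UNIV_vector_derivative:
  fixes f :: "real \<Rightarrow> 'b::real_normed_vector"
  assumes "smooth_on UNIV f"
  shows "(f has_vector_derivative vector_derivative f (at s)) (at s)"
    and "(\<lambda>s. vector_derivative f (at s)) differentiable (at s)"
proof -
  obtain D where D0: "\<forall>x. D [] x = f x"
    and D: "\<forall>vs x. (D vs has_derivative (\<lambda>v. D (v # vs) x)) (at x)"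
    using assms unfolding smooth_on_def by blast
  have "D [] = f" using D0 by auto
  have has_vd: "(f has_vector_derivative D [1] s) (at s)" for s
  proof -
    have df: "(f has_derivative (\<lambda>v. D [v] s)) (at s)" using D \<open>D [] = f\<close> by metis
    have "(\<lambda>v. D [v] s) = (\<lambda>v. v *\<^sub>R D [1] s)"
    proof
      fix v :: real
      show "D [v] s = v *\<^sub>R D [1] s"
        using linear_scale[OF has_derivative_linear[OF df], of v 1] by simp
    qed
    then show ?thesis using df unfolding has_vector_derivative_def by simp
  qed
  then have vd: "vector_derivative f (at s) = D [1] s" for s
    by (rule vector_derivative_at)
  show "(f has_vector_derivative vector_derivative f (at s)) (at s)"
    using has_vd vd by simp
  show "(\<lambda>s. vector_derivative f (at s)) differentiable (at s)"
    using D vd unfolding differentiable_def by (metis ext)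
qed

lemma has_vector_derivative_shift_eq:
  fixes f :: "real \<Rightarrow> 'b::real_normed_vector"
  assumes f': "\<And>s. (f has_vector_derivative f' s) (at s)"
    and shift: "\<And>s. f (s + l) = c *\<^sub>R f s"
  shows "f' (s + l) = c *\<^sub>R f' s"
proof -
  have "((f \<circ> (\<lambda>s. s + l)) has_vector_derivative 1 *\<^sub>R f' (s + l)) (at s)"
    by (rule vector_diff_chain_at[OF _ f']) (auto intro!: derivative_eq_intros)
  moreover have "f \<circ> (\<lambda>s. s + l) = (\<lambda>s. c *\<^sub>R f s)"
    using shift by auto
  moreover have "((\<lambda>s. c *\<^sub>R f s) has_vector_derivative c *\<^sub>R f' s) (at s)"
    using f' by (auto intro!: derivative_eq_intros)
  ultimately show ?thesis
    using vector_derivative_unique_at by fastforce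
qed

lemma differentiable_cross3:
  fixes f g :: "'a::real_normed_vector \<Rightarrow> real^3"
  assumes "f differentiable (at x)" "g differentiable (at x)"
  shows "(\<lambda>x. cross3 (f x) (g x)) differentiable (at x)"
proof -
  have "bounded_bilinear (cross3 :: real^3 \<Rightarrow> real^3 \<Rightarrow> real^3)"
    using bilinear_cross bilinear_conv_bounded_bilinear by blast
  then show ?thesis
    using assms unfolding differentiable_def by (blast intro: bounded_bilinear.FDERIV)
qed

lemma cross3_neq_0_if_independent:
  fixes g x :: "real^3"
  assumes "\<forall>a b. a *\<^sub>R g + b *\<^sub>R x = 0 \<longrightarrow> a = 0 \<and> b = 0"
  shows "cross3 g x \<noteq> 0"
proof
  assume "cross3 g x = 0"
  then have "collinear {0, g, x}" using cross_eq_0 by blast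
  then consider "g = 0" | "x = 0" | c where "x = c *\<^sub>R g"
    using collinear_lemma by blast
  then show False
  proof cases
    case 1 then show ?thesis using assms[rule_format, of 1 0] by simp
  next
    case 2 then show ?thesis using assms[rule_format, of 0 1] by simp
  next
    case (3 c) then show ?thesis using assms[rule_format, of c "-1"] by simp
  qed
qed

lemma cross3_coplanar_decomposition:
  fixes g x y :: "real^3"
  defines "N \<equiv> cross3 g x"
  assumes "det (vector [g, x, y] :: real^3^3) = 0" and "N \<noteq> 0"
  shows "y = ((cross3 y x \<bullet> N) / (N \<bullet> N)) *\<^sub>R g + ((cross3 g y \<bullet> N) / (N \<bullet> N)) *\<^sub>R x"
proof -
  have "(N \<bullet> N) *\<^sub>R y = (cross3 y x \<bullet> N) *\<^sub>R g + (cross3 g y \<bullet> N) *\<^sub>R x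
      + det (vector [g, x, y] :: real^3^3) *\<^sub>R N"
    unfolding N_def vec_eq_iff forall_3
    by (simp add: cross3_def inner_vec_def sum_3 det_3 vector_def) algebra
  then have "(N \<bullet> N) *\<^sub>R y = (cross3 y x \<bullet> N) *\<^sub>R g + (cross3 g y \<bullet> N) *\<^sub>R x"
    using assms(2) by simp
  moreover have "N \<bullet> N \<noteq> 0" using assms(3) by simp
  ultimately have "y = (1 / (N \<bullet> N)) *\<^sub>R ((cross3 y x \<bullet> N) *\<^sub>R g + (cross3 g y \<bullet> N) *\<^sub>R x)"
    by (metis divide_self_if scaleR_one scaleR_scaleR times_divide_eq_left mult_1)
  then show ?thesis by (simp add: scaleR_add_right)
qed

lemma antiderivative_on_open_interval:
  fixes b :: "real \<Rightarrow> real"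
  assumes "continuous_on UNIV b"
  obtains B where "\<And>x. x \<in> {c<..<d} \<Longrightarrow> (B has_real_derivative b x) (at x)"
proof
  fix x assume x: "x \<in> {c<..<d}"
  have "((\<lambda>x. integral {c..x} b) has_real_derivative b x) (at x within {c..d})"
    using integral_has_real_derivative[of c d b x] assms x continuous_on_subset by force
  then show "((\<lambda>x. integral {c..x} b) has_real_derivative b x) (at x)"
    using at_within_Icc_at[of c x d] x by simp
qed

lemma interior_positive_critical_point:
  fixes f f' :: "real \<Rightarrow> real"
  assumes f': "\<And>x. x \<in> {a..b} \<Longrightarrow> (f has_real_derivative f' x) (at x)"
    and "c \<in> {a..b}" "f c > 0" "f a \<le> 0" "f b \<le> 0"
  shows "\<exists>t. f t > 0 \<and> f' t = 0"
proof -
  have "continuous_on {a..b} f"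
    using f' by (meson DERIV_isCont continuous_at_imp_continuous_on)
  then obtain t where t: "t \<in> {a..b}" and max: "\<forall>y\<in>{a..b}. f y \<le> f t"
    using continuous_attains_sup[OF compact_Icc] assms(2) by (metis empty_iff)
  have pos: "f t > 0" using max assms(2,3) by fastforce
  then have "a < t" "t < b" using t assms(4,5) by (auto simp: order.order_iff_strict)
  then have "\<forall>y. \<bar>t - y\<bar> < min (t - a) (b - t) \<longrightarrow> f y \<le> f t"
    using max by (auto simp: abs_if)
  then have "f' t = 0"
    by (intro DERIV_local_max[OF f'[OF t], of "min (t - a) (b - t)"]) (use \<open>a < t\<close> \<open>t < b\<close> in auto)
  with pos show ?thesis by blast
qed

text \<open>With an integrating factor \<open>exp (- B)\<close>, \<open>B' = b\<close>, the equation \<open>A' = b A\<close> becomes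
  the vanishing of \<open>(exp (- B) A)'\<close>, which must happen at a positive maximum of
  \<open>\<plusminus> exp (- B) A\<close> on \<open>[c - l, c + l]\<close> since \<open>A\<close> changes sign over a half period.\<close>
lemma antiperiodic_logarithmic_derivative:
  fixes A A' b :: "real \<Rightarrow> real"
  assumes A': "\<And>x. (A has_real_derivative A' x) (at x)"
    and "continuous_on UNIV b" and anti: "\<And>s. A (s + l) = - A s" and "l > 0" and "A c \<noteq> 0"
  obtains t where "A t \<noteq> 0" "A' t = b t * A t"
proof -
  obtain B where B: "\<And>x. x \<in> {c-l-1<..<c+l+1} \<Longrightarrow> (B has_real_derivative b x) (at x)"
    using antiderivative_on_open_interval[OF assms(2)] by blast
  define \<epsilon> :: real where "\<epsilon> = sgn (A c)"
  define f where "f s = exp (- B s) * (\<epsilon> * A s)" for s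
  define f' where "f' s = exp (- B s) * (\<epsilon> * (A' s - b s * A s))" for s
  have f': "(f has_real_derivative f' x) (at x)" if "x \<in> {c-l..c+l}" for x
    unfolding f_def f'_def using that
    by (auto intro!: derivative_eq_intros B A' simp: algebra_simps)
  have "A (c - l) = - A c" using anti[of "c - l"] by simp
  moreover have "A (c + l) = - A c" using anti by simp
  moreover have "\<epsilon> * A c > 0" using \<open>A c \<noteq> 0\<close> by (simp add: \<epsilon>_def sgn_real_def)
  then have "exp (- B s) * (\<epsilon> * A c) > 0" for s by (simp add: mult_pos_pos)
  ultimately have "f c > 0" "f (c - l) \<le> 0" "f (c + l) \<le> 0"
    unfolding f_def by (simp_all add: less_imp_le)
  then obtain t where "f t > 0" "f' t = 0"
    using interior_positive_critical_point[of "c - l" "c + l" f f' c] f' \<open>l > 0\<close> by auto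
  then show thesis by (intro that) (auto simp: f_def f'_def)
qed

lemma scalar_linear_ode_antiperiodic_imp_zero:
  fixes x :: "real \<Rightarrow> 'a::real_normed_vector" and b :: "real \<Rightarrow> real"
  assumes x': "\<And>s. (x has_vector_derivative b s *\<^sub>R x s) (at s)"
    and "continuous_on UNIV b" and "x l = - x 0" and "l > 0"
  shows "x 0 = 0"
proof -
  obtain B where B: "\<And>s. s \<in> {-1<..<l+1} \<Longrightarrow> (B has_real_derivative b s) (at s)"
    using antiderivative_on_open_interval[OF assms(2)] by blast
  define y where "y s = exp (- B s) *\<^sub>R x s" for s
  have "(y has_derivative (\<lambda>h. 0)) (at s within {0..l})" if "s \<in> {0..l}" for s
  proof -
    have "((\<lambda>s. exp (- B s)) has_real_derivative exp (- B s) * - b s) (at s)"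
      using that by (auto intro!: derivative_eq_intros B)
    from has_vector_derivative_scaleR[OF this x']
    have "(y has_vector_derivative 0) (at s)"
      unfolding y_def by (simp add: algebra_simps)
    then show ?thesis
      unfolding has_vector_derivative_def by (simp add: has_derivative_at_withinI)
  qed
  then have "y l = y 0"
    using has_derivative_zero_constant[of "{0..l}" y] \<open>l > 0\<close> by force
  then have "exp (- B 0) *\<^sub>R x 0 = - (exp (- B l) *\<^sub>R x 0)"
    using assms(3) by (simp add: y_def)
  then have "(exp (- B l) + exp (- B 0)) *\<^sub>R x 0 = 0"
    by (simp add: scaleR_left_distrib)
  moreover have "exp (- B l) + exp (- B 0) > 0"
    by (intro add_pos_pos exp_gt_zero)
  ultimately show ?thesis by simp
qed

lemma cuspidal_edge_model_has_derivative:
  "(cuspidal_edge_model has_derivative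
     (\<lambda>h. (6 * u\<^sup>2 * fst h) *\<^sub>R axis 1 1 + (- 6 * u * fst h) *\<^sub>R axis 2 1 + snd h *\<^sub>R axis 3 1))
   (at (u, v))"
proof -
  have model: "cuspidal_edge_model =
      (\<lambda>z. (2 * fst z ^ 3) *\<^sub>R axis 1 1 + (- 3 * fst z ^ 2) *\<^sub>R axis 2 1 + snd z *\<^sub>R axis 3 1)"
    unfolding cuspidal_edge_model_def
    by (auto simp: fun_eq_iff vec_eq_iff forall_3 axis_def vector_3)
  have d: "((\<lambda>z::real \<times> real. 2 * fst z ^ 3) has_derivative (\<lambda>h. 6 * u\<^sup>2 * fst h)) (at (u, v))"
    "((\<lambda>z::real \<times> real. - 3 * fst z ^ 2) has_derivative (\<lambda>h. - 6 * u * fst h)) (at (u, v))"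
    by (auto intro!: derivative_eq_intros)
  show ?thesis
    unfolding model by (intro has_derivative_add has_derivative_scaleR_left has_derivative_snd
        has_derivative_ident d)
qed

lemma a_completion_has_derivative:
  fixes \<gamma> \<xi> :: "real \<Rightarrow> real^3"
  assumes "(\<gamma> has_vector_derivative \<gamma>') (at s)" "(\<xi> has_vector_derivative \<xi>') (at s)"
  shows "(a_completion \<gamma> \<xi> has_derivative
           (\<lambda>h. fst h *\<^sub>R (\<gamma>' + u *\<^sub>R \<xi>') + snd h *\<^sub>R \<xi> s)) (at (s, u))"
proof -
  have "a_completion \<gamma> \<xi> = (\<lambda>z. \<gamma> (fst z) + snd z *\<^sub>R \<xi> (fst z))"
    unfolding a_completion_def by auto
  moreover have "((\<lambda>z. \<gamma> (fst z)) has_derivative (\<lambda>h. fst h *\<^sub>R \<gamma>')) (at (s, u))"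
    and "((\<lambda>z. \<xi> (fst z)) has_derivative (\<lambda>h. fst h *\<^sub>R \<xi>')) (at (s, u))"
    using assms[unfolded has_vector_derivative_def]
    by (auto intro!: diff_chain_at[OF has_derivative_fst[OF has_derivative_ident],
        simplified o_def])
  ultimately show ?thesis
    by (auto intro!: derivative_eq_intros simp: algebra_simps)
qed

lemma diffeo_on_derivative_inverse:
  assumes "diffeo_on U \<phi>"
  obtains D D' where "\<And>x. x \<in> U \<Longrightarrow> (\<phi> has_derivative D x) (at x)"
    and "\<And>y. y \<in> \<phi> ` U \<Longrightarrow> (inv_into U \<phi> has_derivative D' y) (at y)"
    and "\<And>y v. y \<in> \<phi> ` U \<Longrightarrow> D (inv_into U \<phi> y) (D' y v) = v"
    and "\<And>y v. y \<in> \<phi> ` U \<Longrightarrow> v \<noteq> 0 \<Longrightarrow> D' y v \<noteq> 0"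
proof -
  have "open U" "open (\<phi> ` U)" "smooth_on U \<phi>" "smooth_on (\<phi> ` U) (inv_into U \<phi>)"
    using assms unfolding diffeo_on_def by auto
  then obtain D D' where D: "\<And>x. x \<in> U \<Longrightarrow> (\<phi> has_derivative D x) (at x)"
    and D': "\<And>y. y \<in> \<phi> ` U \<Longrightarrow> (inv_into U \<phi> has_derivative D' y) (at y)"
    using smooth_on_imp_has_derivative by metis
  have right_inverse: "D (inv_into U \<phi> y) (D' y v) = v" if y: "y \<in> \<phi> ` U" for y v
  proof -
    have "((\<phi> \<circ> inv_into U \<phi>) has_derivative (D (inv_into U \<phi> y) \<circ> D' y)) (at y)"
      using diff_chain_at[OF D'[OF y] D] y by (simp add: inv_into_into)
    moreover have "((\<phi> \<circ> inv_into U \<phi>) has_derivative (\<lambda>v. v)) (at y)"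
      using has_derivative_transform_within_open[OF has_derivative_ident \<open>open (\<phi> ` U)\<close> y]
      by (simp add: f_inv_into_f)
    ultimately show ?thesis
      using has_derivative_unique by (metis comp_apply)
  qed
  have inj: "D' y v \<noteq> 0" if "y \<in> \<phi> ` U" "v \<noteq> 0" for y v
    using right_inverse[OF that(1), of v] that
      linear_0[OF has_derivative_linear[OF D[OF inv_into_into[OF that(1)]]]] by auto
  show thesis by (rule that[OF D D' right_inverse inj])
qed

lemma has_derivative_local_composition:
  assumes "open U" "x \<in> U" "\<And>y. y \<in> U \<Longrightarrow> f y = \<Psi> (g (\<phi> y))"
    and "(\<phi> has_derivative D\<phi>) (at x)" "(g has_derivative Dg) (at (\<phi> x))"
    and "(\<Psi> has_derivative D\<Psi>) (at (g (\<phi> x)))"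
  shows "(f has_derivative (\<lambda>h. D\<Psi> (Dg (D\<phi> h)))) (at x)"
proof -
  have "((g \<circ> \<phi>) has_derivative (Dg \<circ> D\<phi>)) (at x)"
    by (rule diff_chain_at[OF assms(4,5)])
  moreover have "(\<Psi> has_derivative D\<Psi>) (at ((g \<circ> \<phi>) x))"
    using assms(6) by simp
  ultimately have "((\<Psi> \<circ> g \<circ> \<phi>) has_derivative (D\<Psi> \<circ> Dg \<circ> D\<phi>)) (at x)"
    by (metis diff_chain_at o_assoc)
  then show ?thesis
    using has_derivative_transform_within_open[OF _ assms(1,2), of "\<Psi> \<circ> g \<circ> \<phi>"] assms(3)
    by (simp add: o_def)
qed

lemma rl_equivalent_factorization:
  assumes "rl_equivalent f p g q"
  obtains U \<phi> \<Psi>' where "p \<in> U" "diffeo_on U \<phi>" "\<phi> p = q"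
    and "\<And>x. x \<in> U \<Longrightarrow> f x = \<Psi>' (g (\<phi> x))"
    and "\<And>x. x \<in> U \<Longrightarrow> \<exists>D. (\<Psi>' has_derivative D) (at (g (\<phi> x))) \<and> (\<forall>v. v \<noteq> 0 \<longrightarrow> D v \<noteq> 0)"
proof -
  obtain U \<phi> W \<Psi> where "p \<in> U" "diffeo_on U \<phi>" "\<phi> p = q" and dW: "diffeo_on W \<Psi>"
    and "f ` U \<subseteq> W" and comm: "\<forall>x\<in>U. \<Psi> (f x) = g (\<phi> x)"
    using assms unfolding rl_equivalent_def by blast
  obtain D' where D': "\<And>y. y \<in> \<Psi> ` W \<Longrightarrow> (inv_into W \<Psi> has_derivative D' y) (at y)"
    and D'_inj: "\<And>y v. y \<in> \<Psi> ` W \<Longrightarrow> v \<noteq> 0 \<Longrightarrow> D' y v \<noteq> 0"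
    using diffeo_on_derivative_inverse[OF dW] by metis
  have "inj_on \<Psi> W" using dW unfolding diffeo_on_def by blast
  show thesis
  proof (rule that[OF \<open>p \<in> U\<close> \<open>diffeo_on U \<phi>\<close> \<open>\<phi> p = q\<close>])
    fix x assume "x \<in> U"
    then have "f x \<in> W" and \<Psi>fx: "\<Psi> (f x) = g (\<phi> x)"
      using \<open>f ` U \<subseteq> W\<close> comm by auto
    then show "f x = inv_into W \<Psi> (g (\<phi> x))"
      using inv_into_f_f[OF \<open>inj_on \<Psi> W\<close>] by metis
    have "g (\<phi> x) \<in> \<Psi> ` W"
      using \<open>f x \<in> W\<close> \<Psi>fx by (metis image_eqI)
    then show "\<exists>D. (inv_into W \<Psi> has_derivative D) (at (g (\<phi> x))) \<and> (\<forall>v. v \<noteq> 0 \<longrightarrow> D v \<noteq> 0)"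
      using D' D'_inj by blast
  qed
qed

lemma diffeo_on_preimage_vertical_line:
  fixes \<phi> :: "real \<times> real \<Rightarrow> real \<times> real"
  assumes "diffeo_on U \<phi>" and "(0, 0) \<in> \<phi> ` U"
  obtains T \<sigma> \<sigma>' where "open T" "0 \<in> T" and "\<And>\<tau>. \<tau> \<in> T \<Longrightarrow> \<sigma> \<tau> \<in> U \<and> \<phi> (\<sigma> \<tau>) = (0, \<tau>)"
    and "(\<sigma> has_derivative (\<lambda>h. h *\<^sub>R \<sigma>')) (at 0)"
    and "\<And>\<tau>. \<tau> \<in> T \<Longrightarrow> \<exists>D v. (\<phi> has_derivative D) (at (\<sigma> \<tau>)) \<and> v \<noteq> 0 \<and> D v = (1, 0)"
proof -
  obtain D\<phi> D\<phi>' where D\<phi>: "\<And>x. x \<in> U \<Longrightarrow> (\<phi> has_derivative D\<phi> x) (at x)"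
    and D\<phi>': "\<And>y. y \<in> \<phi> ` U \<Longrightarrow> (inv_into U \<phi> has_derivative D\<phi>' y) (at y)"
    and inv\<phi>: "\<And>y v. y \<in> \<phi> ` U \<Longrightarrow> D\<phi> (inv_into U \<phi> y) (D\<phi>' y v) = v"
    and D\<phi>'_inj: "\<And>y v. y \<in> \<phi> ` U \<Longrightarrow> v \<noteq> 0 \<Longrightarrow> D\<phi>' y v \<noteq> 0"
    using diffeo_on_derivative_inverse[OF assms(1)] by metis
  define T where "T = (\<lambda>\<tau>. (0, \<tau>)) -` (\<phi> ` U)"
  define \<sigma> where "\<sigma> \<tau> = inv_into U \<phi> (0, \<tau>)" for \<tau>
  have "open T"
    using assms(1) unfolding T_def diffeo_on_def
    by (intro continuous_open_vimage continuous_intros) auto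
  moreover have "0 \<in> T"
    using assms(2) unfolding T_def by simp
  moreover have "\<sigma> \<tau> \<in> U \<and> \<phi> (\<sigma> \<tau>) = (0, \<tau>)" if "\<tau> \<in> T" for \<tau>
    using that unfolding T_def \<sigma>_def by (auto simp: inv_into_into f_inv_into_f)
  moreover have "(\<sigma> has_derivative (\<lambda>h. h *\<^sub>R D\<phi>' (0, 0) (0, 1))) (at 0)"
  proof -
    have "((\<lambda>\<tau>. (0::real, \<tau>)) has_derivative (\<lambda>h. (0, h))) (at 0)"
      by (auto intro!: derivative_eq_intros)
    from diff_chain_at[OF this D\<phi>'[OF assms(2)]]
    have D\<sigma>: "(\<sigma> has_derivative (\<lambda>h. D\<phi>' (0, 0) (0, h))) (at 0)"
      unfolding \<sigma>_def by (simp add: o_def)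
    moreover have "(\<lambda>h. D\<phi>' (0, 0) (0, h)) = (\<lambda>h. h *\<^sub>R D\<phi>' (0, 0) (0, 1))"
    proof
      fix h :: real
      show "D\<phi>' (0, 0) (0, h) = h *\<^sub>R D\<phi>' (0, 0) (0, 1)"
        using linear_scale[OF has_derivative_linear[OF D\<sigma>], of h 1] by simp
    qed
    ultimately show ?thesis by simp
  qed
  moreover have "\<exists>D v. (\<phi> has_derivative D) (at (\<sigma> \<tau>)) \<and> v \<noteq> 0 \<and> D v = (1, 0)" if "\<tau> \<in> T" for \<tau>
  proof (intro exI conjI)
    have y: "(0, \<tau>) \<in> \<phi> ` U" using that unfolding T_def by simp
    show "(\<phi> has_derivative D\<phi> (\<sigma> \<tau>)) (at (\<sigma> \<tau>))"
      unfolding \<sigma>_def using D\<phi> y by (simp add: inv_into_into)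
    show "D\<phi>' (0, \<tau>) (1, 0) \<noteq> 0"
      using D\<phi>'_inj[OF y] by (simp add: zero_prod_def)
    show "D\<phi> (\<sigma> \<tau>) (D\<phi>' (0, \<tau>) (1, 0)) = (1, 0)"
      unfolding \<sigma>_def by (rule inv\<phi>[OF y])
  qed
  ultimately show thesis by (rule that)
qed

text \<open>In the normal form \<open>(u, v) \<mapsto> (2u\<^sup>3, -3u\<^sup>2, v)\<close> the singular set is the line \<open>u = 0\<close>,
  mapped to a regular curve; transporting this line back gives a curve of singular points of
  \<open>f\<close> through \<open>p\<close> whose image has nonzero velocity.\<close>
lemma cuspidal_edge_singular_curve:
  fixes f :: "real \<times> real \<Rightarrow> real^3"
  assumes "is_cuspidal_edge f p"
  obtains T \<sigma> \<sigma>' w where "open T" "0 \<in> T" "\<sigma> 0 = p"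
    and "(\<sigma> has_derivative (\<lambda>h. h *\<^sub>R \<sigma>')) (at 0)"
    and "\<And>\<tau>. \<tau> \<in> T \<Longrightarrow> \<exists>f' v. (f has_derivative f') (at (\<sigma> \<tau>)) \<and> v \<noteq> 0 \<and> f' v = 0"
    and "((f \<circ> \<sigma>) has_derivative (\<lambda>h. h *\<^sub>R w)) (at 0)" and "w \<noteq> 0"
proof -
  obtain U \<phi> \<Psi>' where "p \<in> U" and dU: "diffeo_on U \<phi>" and "\<phi> p = (0, 0)"
    and f_eq: "\<And>x. x \<in> U \<Longrightarrow> f x = \<Psi>' (cuspidal_edge_model (\<phi> x))"
    and D\<Psi>': "\<And>x. x \<in> U \<Longrightarrow> \<exists>D. (\<Psi>' has_derivative D) (at (cuspidal_edge_model (\<phi> x))) \<and>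
      (\<forall>v. v \<noteq> 0 \<longrightarrow> D v \<noteq> 0)"
    using rl_equivalent_factorization[OF assms[unfolded is_cuspidal_edge_def]] by metis
  have "(0, 0) \<in> \<phi> ` U"
    using \<open>p \<in> U\<close> \<open>\<phi> p = (0, 0)\<close> by (metis image_eqI)
  then obtain T \<sigma> \<sigma>' where "open T" "0 \<in> T" and \<sigma>: "\<And>\<tau>. \<tau> \<in> T \<Longrightarrow> \<sigma> \<tau> \<in> U \<and> \<phi> (\<sigma> \<tau>) = (0, \<tau>)"
    and D\<sigma>: "(\<sigma> has_derivative (\<lambda>h. h *\<^sub>R \<sigma>')) (at 0)"
    and D\<phi>: "\<And>\<tau>. \<tau> \<in> T \<Longrightarrow> \<exists>D v. (\<phi> has_derivative D) (at (\<sigma> \<tau>)) \<and> v \<noteq> 0 \<and> D v = (1, 0)"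
    using diffeo_on_preimage_vertical_line[OF dU] by metis
  have "\<sigma> 0 = p"
    using \<sigma>[OF \<open>0 \<in> T\<close>] \<open>p \<in> U\<close> \<open>\<phi> p = (0, 0)\<close> dU unfolding diffeo_on_def by (metis inj_onD)
  have model': "(cuspidal_edge_model has_derivative (\<lambda>h. snd h *\<^sub>R axis 3 1)) (at (0, \<tau>))" for \<tau>
    using cuspidal_edge_model_has_derivative[of 0 \<tau>] by simp
  have kernel: "\<exists>f' v. (f has_derivative f') (at (\<sigma> \<tau>)) \<and> v \<noteq> 0 \<and> f' v = 0"
    if \<tau>: "\<tau> \<in> T" for \<tau>
  proof -
    have x: "\<sigma> \<tau> \<in> U" and \<phi>x: "\<phi> (\<sigma> \<tau>) = (0, \<tau>)" using \<sigma>[OF \<tau>] by auto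
    obtain D\<Psi> where D\<Psi>: "(\<Psi>' has_derivative D\<Psi>) (at (cuspidal_edge_model (0, \<tau>)))"
      using D\<Psi>'[OF x] unfolding \<phi>x by blast
    obtain D v where D: "(\<phi> has_derivative D) (at (\<sigma> \<tau>))" "v \<noteq> 0" "D v = (1, 0)"
      using D\<phi>[OF \<tau>] by blast
    have "(f has_derivative (\<lambda>h. D\<Psi> (snd (D h) *\<^sub>R axis 3 1))) (at (\<sigma> \<tau>))"
      by (rule has_derivative_local_composition[where \<phi>=\<phi> and g=cuspidal_edge_model
          and \<Psi>=\<Psi>' and D\<Psi>=D\<Psi> and Dg="\<lambda>h. snd h *\<^sub>R axis 3 1"])
        (use dU x f_eq D(1) model' D\<Psi> in \<open>simp_all add: \<phi>x diffeo_on_def\<close>)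
    moreover have "D\<Psi> (snd (D v) *\<^sub>R axis 3 1) = 0"
      using D(3) linear_0[OF has_derivative_linear[OF D\<Psi>]] by simp
    ultimately show ?thesis using D(2) by blast
  qed
  obtain D where D: "(\<Psi>' has_derivative D) (at (cuspidal_edge_model (0, 0)))"
    and D_inj: "\<forall>v. v \<noteq> 0 \<longrightarrow> D v \<noteq> 0"
    using D\<Psi>'[OF \<open>p \<in> U\<close>] unfolding \<open>\<phi> p = (0, 0)\<close> by blast
  have axis: "((\<lambda>\<tau>. (0::real, \<tau>)) has_derivative (\<lambda>h. (0, h))) (at 0)"
    by (auto intro!: derivative_eq_intros)
  have "((f \<circ> \<sigma>) has_derivative (\<lambda>h. D (snd (0, h) *\<^sub>R axis 3 1))) (at 0)"
    using has_derivative_local_composition[where \<phi>="\<lambda>\<tau>. (0, \<tau>)" and g=cuspidal_edge_model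
        and \<Psi>=\<Psi>', OF \<open>open T\<close> \<open>0 \<in> T\<close> _ axis model' D] f_eq \<sigma> by simp
  moreover have "D (h *\<^sub>R axis 3 1) = h *\<^sub>R D (axis 3 1)" for h
    using linear_scale[OF has_derivative_linear[OF D]] by simp
  moreover have "D (axis 3 1) \<noteq> 0"
    using D_inj by (simp add: axis_eq_0_iff)
  ultimately show thesis
    using that \<open>open T\<close> \<open>0 \<in> T\<close> \<open>\<sigma> 0 = p\<close> D\<sigma> kernel by simp
qed

lemma developable_moebius_strip_ruling_derivative:
  assumes "developable_moebius_strip l \<gamma> \<xi>"
  obtains A B where "\<And>s. A differentiable (at s)" and "continuous_on UNIV B"
    and "\<And>s. vector_derivative \<xi> (at s) = A s *\<^sub>R vector_derivative \<gamma> (at s) + B s *\<^sub>R \<xi> s"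
    and "\<And>s. A (s + l) = - A s"
proof -
  define \<gamma>' where "\<gamma>' s = vector_derivative \<gamma> (at s)" for s
  define \<xi>' where "\<xi>' s = vector_derivative \<xi> (at s)" for s
  have "smooth_on UNIV \<gamma>" "smooth_on UNIV \<xi>" and \<gamma>_per: "\<And>s. \<gamma> (s + l) = \<gamma> s"
    and \<xi>_anti: "\<And>s. \<xi> (s + l) = - \<xi> s"
    and indep: "\<And>s. \<forall>a b. a *\<^sub>R \<gamma>' s + b *\<^sub>R \<xi> s = 0 \<longrightarrow> a = 0 \<and> b = 0"
    and flat: "\<And>s. det (vector [\<gamma>' s, \<xi> s, \<xi>' s] :: real^3^3) = 0"
    using assms unfolding developable_moebius_strip_def \<gamma>'_def \<xi>'_def by auto
  then have d\<gamma>: "(\<gamma> has_vector_derivative \<gamma>' s) (at s)" "\<gamma>' differentiable (at s)"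
    and d\<xi>: "(\<xi> has_vector_derivative \<xi>' s) (at s)" "\<xi>' differentiable (at s)" for s
    unfolding \<gamma>'_def \<xi>'_def by (simp_all add: smooth_on_UNIV_vector_derivative)
  define N where "N s = cross3 (\<gamma>' s) (\<xi> s)" for s
  define A where "A s = (cross3 (\<xi>' s) (\<xi> s) \<bullet> N s) / (N s \<bullet> N s)" for s
  define B where "B s = (cross3 (\<gamma>' s) (\<xi>' s) \<bullet> N s) / (N s \<bullet> N s)" for s
  have "N s \<noteq> 0" for s
    unfolding N_def using indep by (rule cross3_neq_0_if_independent)
  then have NN: "N s \<bullet> N s \<noteq> 0" and ruling: "\<xi>' s = A s *\<^sub>R \<gamma>' s + B s *\<^sub>R \<xi> s" for s
    unfolding A_def B_def using cross3_coplanar_decomposition[OF flat] by (auto simp: N_def)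
  have "\<xi> differentiable (at s)" for s
    using d\<xi>(1) by (rule differentiableI_vector)
  then have "N differentiable (at s)" "(\<lambda>s. cross3 (\<xi>' s) (\<xi> s)) differentiable (at s)"
    "(\<lambda>s. cross3 (\<gamma>' s) (\<xi>' s)) differentiable (at s)" for s
    unfolding N_def using d\<gamma>(2) d\<xi>(2) by (simp_all add: differentiable_cross3)
  then have dA: "A differentiable (at s)" and dB: "B differentiable (at s)" for s
    unfolding A_def B_def using NN by simp_all
  have "continuous_on UNIV B"
    using dB by (simp add: continuous_at_imp_continuous_on differentiable_imp_continuous_within)
  moreover have "A (s + l) = - A s" for s
  proof -
    have "\<gamma>' (s + l) = \<gamma>' s" "\<xi>' (s + l) = - \<xi>' s"
      using has_vector_derivative_shift_eq[OF d\<gamma>(1), of l 1]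
        has_vector_derivative_shift_eq[OF d\<xi>(1), of l "- 1"] \<gamma>_per \<xi>_anti by simp_all
    then have "(A (s + l) + A s) *\<^sub>R \<gamma>' s + (B s - B (s + l)) *\<^sub>R \<xi> s = 0"
      using ruling[of s] ruling[of "s + l"] \<xi>_anti[of s] by (simp add: algebra_simps)
    then show ?thesis using indep by (simp add: eq_neg_iff_add_eq_0)
  qed
  ultimately show thesis
    using that dA ruling unfolding \<gamma>'_def \<xi>'_def by blast
qed

lemma developable_moebius_strip_ruling_coefficient_nonzero:
  assumes "developable_moebius_strip l \<gamma> \<xi>" and "continuous_on UNIV B"
    and ruling: "\<And>s. vector_derivative \<xi> (at s) = A s *\<^sub>R vector_derivative \<gamma> (at s) + B s *\<^sub>R \<xi> s"
  shows "\<exists>c. A c \<noteq> 0"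
proof (rule ccontr)
  assume "\<nexists>c. A c \<noteq> 0"
  then have "vector_derivative \<xi> (at s) = B s *\<^sub>R \<xi> s" for s
    using ruling by simp
  then have "(\<xi> has_vector_derivative B s *\<^sub>R \<xi> s) (at s)" for s
    using assms(1) smooth_on_UNIV_vector_derivative(1) unfolding developable_moebius_strip_def
    by metis
  moreover have "l > 0" "\<xi> l = - \<xi> 0"
    using assms(1) unfolding developable_moebius_strip_def by (auto dest: spec[of _ 0])
  ultimately have "\<xi> 0 = 0"
    using scalar_linear_ode_antiperiodic_imp_zero[OF _ \<open>continuous_on UNIV B\<close>] by blast
  moreover have "\<xi> 0 \<noteq> 0"
    using assms(1) unfolding developable_moebius_strip_def
    by (metis scaleR_one scaleR_zero_left add_0 zero_neq_one)
  ultimately show False by contradiction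
qed

lemma a_completion_null_vector_imp:
  fixes \<gamma> \<xi> :: "real \<Rightarrow> real^3"
  assumes "(\<gamma> has_vector_derivative \<gamma>') (at s)"
    and "(\<xi> has_vector_derivative a *\<^sub>R \<gamma>' + b *\<^sub>R \<xi> s) (at s)"
    and indep: "\<forall>c d. c *\<^sub>R \<gamma>' + d *\<^sub>R \<xi> s = 0 \<longrightarrow> c = 0 \<and> d = 0"
    and "(a_completion \<gamma> \<xi> has_derivative F') (at (s, u))" and "v \<noteq> 0" and "F' v = 0"
  shows "1 + u * a = 0"
proof -
  have "F' = (\<lambda>h. fst h *\<^sub>R (\<gamma>' + u *\<^sub>R (a *\<^sub>R \<gamma>' + b *\<^sub>R \<xi> s)) + snd h *\<^sub>R \<xi> s)"
    using has_derivative_unique[OF assms(4) a_completion_has_derivative[OF assms(1,2)]] .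
  then have "(fst v * (1 + u * a)) *\<^sub>R \<gamma>' + (fst v * u * b + snd v) *\<^sub>R \<xi> s = 0"
    using \<open>F' v = 0\<close> by (simp add: algebra_simps)
  then have "fst v * (1 + u * a) = 0" "fst v * u * b + snd v = 0"
    using indep by blast+
  moreover have "fst v \<noteq> 0"
    using \<open>v \<noteq> 0\<close> calculation(2) by (auto simp: prod_eq_iff)
  ultimately show ?thesis by simp
qed

lemma a_completion_singular_point:
  fixes \<gamma> \<xi> :: "real \<Rightarrow> real^3"
  assumes "(\<gamma> has_vector_derivative \<gamma>') (at s)"
    and "(\<xi> has_vector_derivative a *\<^sub>R \<gamma>' + b *\<^sub>R \<xi> s) (at s)" and "1 + u * a = 0"
  shows "singular_point (a_completion \<gamma> \<xi>) (s, u)"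
  unfolding singular_point_def
proof (intro exI conjI)
  let ?F' = "\<lambda>h. fst h *\<^sub>R (\<gamma>' + u *\<^sub>R (a *\<^sub>R \<gamma>' + b *\<^sub>R \<xi> s)) + snd h *\<^sub>R \<xi> s"
  show "(a_completion \<gamma> \<xi> has_derivative ?F') (at (s, u))"
    by (rule a_completion_has_derivative[OF assms(1,2)])
  have "\<gamma>' + u *\<^sub>R (a *\<^sub>R \<gamma>' + b *\<^sub>R \<xi> s) = (1 + u * a) *\<^sub>R \<gamma>' + (u * b) *\<^sub>R \<xi> s"
    by (simp add: algebra_simps)
  then have "\<gamma>' + u *\<^sub>R (a *\<^sub>R \<gamma>' + b *\<^sub>R \<xi> s) = (u * b) *\<^sub>R \<xi> s"
    using assms(3) by simp
  then have "?F' h = (fst h * (u * b) + snd h) *\<^sub>R \<xi> s" for h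
    by (simp add: scaleR_add_left)
  then have "range ?F' \<subseteq> span {\<xi> s}"
    by (auto simp: span_base span_scale)
  then have "dim (range ?F') \<le> card {\<xi> s}"
    by (intro dim_le_card) auto
  then show "dim (range ?F') < 2" by simp
qed

lemma a_completion_not_cuspidal_edge:
  fixes \<gamma> \<xi> :: "real \<Rightarrow> real^3" and A B :: "real \<Rightarrow> real"
  assumes d\<gamma>: "\<And>s. (\<gamma> has_vector_derivative \<gamma>' s) (at s)"
    and d\<xi>: "\<And>s. (\<xi> has_vector_derivative A s *\<^sub>R \<gamma>' s + B s *\<^sub>R \<xi> s) (at s)"
    and indep: "\<And>s. \<forall>c d. c *\<^sub>R \<gamma>' s + d *\<^sub>R \<xi> s = 0 \<longrightarrow> c = 0 \<and> d = 0"
    and dA: "(A has_real_derivative B t * A t) (at t)" and "A t \<noteq> 0"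
  shows "\<not> is_cuspidal_edge (a_completion \<gamma> \<xi>) (t, - 1 / A t)"
proof
  assume "is_cuspidal_edge (a_completion \<gamma> \<xi>) (t, - 1 / A t)"
  then show False
  proof (rule cuspidal_edge_singular_curve)
    fix T \<sigma> \<sigma>' w assume "open T" "0 \<in> T" and \<sigma>0: "\<sigma> 0 = (t, - 1 / A t)"
      and D\<sigma>: "(\<sigma> has_derivative (\<lambda>h. h *\<^sub>R \<sigma>')) (at 0)"
      and kernel: "\<And>\<tau>. \<tau> \<in> T \<Longrightarrow>
        \<exists>F' v. (a_completion \<gamma> \<xi> has_derivative F') (at (\<sigma> \<tau>)) \<and> v \<noteq> 0 \<and> F' v = 0"
      and Dw: "((a_completion \<gamma> \<xi> \<circ> \<sigma>) has_derivative (\<lambda>h. h *\<^sub>R w)) (at 0)" and "w \<noteq> 0"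
    have singular_curve: "1 + snd (\<sigma> \<tau>) * A (fst (\<sigma> \<tau>)) = 0" if "\<tau> \<in> T" for \<tau>
      using kernel[OF that]
        a_completion_null_vector_imp[where s="fst (\<sigma> \<tau>)" and u="snd (\<sigma> \<tau>)", OF d\<gamma> d\<xi> indep]
      by auto
    have Dfst: "((\<lambda>\<tau>. fst (\<sigma> \<tau>)) has_real_derivative fst \<sigma>') (at 0)"
      and Dsnd: "((\<lambda>\<tau>. snd (\<sigma> \<tau>)) has_real_derivative snd \<sigma>') (at 0)"
      by (rule has_derivative_imp_has_field_derivative[OF has_derivative_fst[OF D\<sigma>]], simp,
          rule has_derivative_imp_has_field_derivative[OF has_derivative_snd[OF D\<sigma>]], simp)
    have "((\<lambda>\<tau>. A (fst (\<sigma> \<tau>))) has_real_derivative B t * A t * fst \<sigma>') (at 0)"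
      by (rule DERIV_chain2[OF _ Dfst]) (simp add: \<sigma>0 dA)
    then have "((\<lambda>\<tau>. 1 + snd (\<sigma> \<tau>) * A (fst (\<sigma> \<tau>))) has_real_derivative snd \<sigma>' * A t - B t * fst \<sigma>')
        (at 0)"
      using \<open>A t \<noteq> 0\<close> by (auto intro!: derivative_eq_intros Dsnd simp: \<sigma>0 field_simps)
    moreover have "((\<lambda>\<tau>. 1 + snd (\<sigma> \<tau>) * A (fst (\<sigma> \<tau>))) has_real_derivative 0) (at 0)"
      by (rule has_field_derivative_transform_within_open[OF DERIV_const \<open>open T\<close> \<open>0 \<in> T\<close>])
        (simp add: singular_curve)
    ultimately have tangency: "snd \<sigma>' * A t = B t * fst \<sigma>'"
      using DERIV_unique by fastforce
    have "(a_completion \<gamma> \<xi> has_derivative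
        (\<lambda>h. fst h *\<^sub>R (\<gamma>' t + (- 1 / A t) *\<^sub>R (A t *\<^sub>R \<gamma>' t + B t *\<^sub>R \<xi> t)) + snd h *\<^sub>R \<xi> t))
        (at (\<sigma> 0))"
      unfolding \<sigma>0 by (rule a_completion_has_derivative[OF d\<gamma> d\<xi>])
    from fun_cong[OF has_derivative_unique[OF Dw diff_chain_at[OF D\<sigma> this]], of 1]
    have "w = fst \<sigma>' *\<^sub>R (\<gamma>' t + (- 1 / A t) *\<^sub>R (A t *\<^sub>R \<gamma>' t + B t *\<^sub>R \<xi> t)) + snd \<sigma>' *\<^sub>R \<xi> t"
      by simp
    also have "\<dots> = ((snd \<sigma>' * A t - B t * fst \<sigma>') / A t) *\<^sub>R \<xi> t"
      using \<open>A t \<noteq> 0\<close> by (simp add: algebra_simps diff_divide_distrib)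
    finally have "w = 0"
      using tangency by simp
    with \<open>w \<noteq> 0\<close> show False ..
  qed
qed

theorem mainTheorem1:
  fixes l :: real and \<gamma> \<xi> :: "real \<Rightarrow> real^3"
  assumes "developable_moebius_strip l \<gamma> \<xi>"
  shows "\<exists>p. singular_point (a_completion \<gamma> \<xi>) p \<and>
             \<not> is_cuspidal_edge (a_completion \<gamma> \<xi>) p"
proof -
  define \<gamma>' where "\<gamma>' s = vector_derivative \<gamma> (at s)" for s
  obtain A B where dA: "\<And>s. A differentiable (at s)" and "continuous_on UNIV B"
    and ruling: "\<And>s. vector_derivative \<xi> (at s) = A s *\<^sub>R \<gamma>' s + B s *\<^sub>R \<xi> s"
    and A_anti: "\<And>s. A (s + l) = - A s"
    using developable_moebius_strip_ruling_derivative[OF assms] unfolding \<gamma>'_def by metis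
  have "l > 0" and indep: "\<And>s. \<forall>a b. a *\<^sub>R \<gamma>' s + b *\<^sub>R \<xi> s = 0 \<longrightarrow> a = 0 \<and> b = 0"
    and d\<gamma>: "\<And>s. (\<gamma> has_vector_derivative \<gamma>' s) (at s)"
    and d\<xi>: "\<And>s. (\<xi> has_vector_derivative A s *\<^sub>R \<gamma>' s + B s *\<^sub>R \<xi> s) (at s)"
    using assms smooth_on_UNIV_vector_derivative(1) ruling[symmetric]
    unfolding developable_moebius_strip_def \<gamma>'_def by metis+
  obtain c where "A c \<noteq> 0"
    using developable_moebius_strip_ruling_coefficient_nonzero[OF assms \<open>continuous_on UNIV B\<close>]
      ruling
    unfolding \<gamma>'_def by blast
  then obtain t where "A t \<noteq> 0" and "deriv A t = B t * A t"
    using antiperiodic_logarithmic_derivative[of A "deriv A" B l c] dA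
      \<open>continuous_on UNIV B\<close> A_anti \<open>l > 0\<close> by (metis DERIV_deriv_iff_real_differentiable)
  then have "singular_point (a_completion \<gamma> \<xi>) (t, - 1 / A t)"
    and "\<not> is_cuspidal_edge (a_completion \<gamma> \<xi>) (t, - 1 / A t)"
    using a_completion_singular_point[OF d\<gamma> d\<xi>] a_completion_not_cuspidal_edge[OF d\<gamma> d\<xi> indep]
      DERIV_deriv_iff_real_differentiable[of A t] dA by auto
  then show ?thesis by blast
qed

end
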